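(* Let $PV_3$ be the group with generators $\lambda_{12},\lambda_{21},\lambda_{13},\lambda_{31},\lambda_{23},\lambda_{32}$ and the six defining relations $$\lambda_{ki}\lambda_{kj}\lambda_{ij}=\lambda_{ij}\lambda_{kj}\lambda_{ki}\qquad\text{for all } \{i,j,k\}=\{1,2,3\}$$ (i.e. for every ordering $(k,i,j)$ of three distinct indices). Then there exists a group $G_3$ such that $PV_3\cong G_3\ast\mathbb{Z}$.
   Context: $PV_3$ is the pure virtual braid group on three strands (the kernel of the canonical epimorphism from the virtual braid group $VB_3$ onto the symmetric group $\Sigma_3$); the presentation above is a known presentation of it and may be taken as its definition. $\ast$ denotes the free product of groups. *)

theory Defs
  imports "HOL-Algebra.Algebra"
begin

text \<open>Words over an alphabet: a letter is a pair (generator, exponent sign),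
  True meaning the generator itself, False its inverse.\<close>

type_synonym 'a word = "('a \<times> bool) list"

inductive pres_eq :: "'a word set \<Rightarrow> 'a word \<Rightarrow> 'a word \<Rightarrow> bool" for R where
  pres_refl: "pres_eq R w w"
| pres_sym: "pres_eq R u v \<Longrightarrow> pres_eq R v u"
| pres_trans: "pres_eq R u v \<Longrightarrow> pres_eq R v w \<Longrightarrow> pres_eq R u w"
| pres_cancel: "pres_eq R (u @ [(a, b), (a, \<not> b)] @ v) (u @ v)"
| pres_rel: "r \<in> R \<Longrightarrow> pres_eq R (u @ r @ v) (u @ v)"

definition word_class :: "'a word set \<Rightarrow> 'a word \<Rightarrow> 'a word set" where
  "word_class R w = {w'. pres_eq R w w'}"

definition presented_group :: "'a set \<Rightarrow> 'a word set \<Rightarrow> ('a word set) monoid" where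
  "presented_group S R =
     \<lparr> carrier = word_class R ` lists (S \<times> UNIV),
       monoid.mult = (\<lambda>A B. {w. \<exists>a\<in>A. \<exists>b\<in>B. pres_eq R (a @ b) w}),
       one = word_class R [] \<rparr>"

text \<open>The free product of two groups G and H, given by the standard presentation
  with generators the disjoint union of the carriers and relators the
  multiplication tables of G and H.\<close>

definition free_product :: "('a, 'c) monoid_scheme \<Rightarrow> ('b, 'd) monoid_scheme
    \<Rightarrow> (('a + 'b) word set) monoid" (infixl \<open>\<star>\<close> 65) where
  "free_product G H =
     presented_group (Inl ` carrier G \<union> Inr ` carrier H)
       ({[(Inl g, True), (Inl h, True), (Inl (g \<otimes>\<^bsub>G\<^esub> h), False)] | g h.
            g \<in> carrier G \<and> h \<in> carrier G}
        \<union> {[(Inr g, True), (Inr h, True), (Inr (g \<otimes>\<^bsub>H\<^esub> h), False)] | g h.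
            g \<in> carrier H \<and> h \<in> carrier H})"

text \<open>The pure virtual braid group PV_3: generators lambda_ij, i \<noteq> j in {1,2,3},
  encoded as the pair (i,j), with the six relations
  lambda_ki lambda_kj lambda_ij = lambda_ij lambda_kj lambda_ki for distinct i,j,k,
  written as relators lambda_ki lambda_kj lambda_ij lambda_ki^-1 lambda_kj^-1 lambda_ij^-1.\<close>

definition PV3_gens :: "(nat \<times> nat) set" where
  "PV3_gens = {(i, j). i \<in> {1, 2, 3} \<and> j \<in> {1, 2, 3} \<and> i \<noteq> j}"

definition PV3_rels :: "(nat \<times> nat) word set" where
  "PV3_rels = {[((k, i), True), ((k, j), True), ((i, j), True),
                ((k, i), False), ((k, j), False), ((i, j), False)] | i j k.
               {i, j, k} = {1, 2, 3} \<and> i \<noteq> j \<and> j \<noteq> k \<and> i \<noteq> k}"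

definition PV3 :: "((nat \<times> nat) word set) monoid" where
  "PV3 = presented_group PV3_gens PV3_rels"

end

theory Submission
  imports Defs
begin

text \<open>Put c = \<lambda>23 and let G3 be the subgroup of PV3 generated by the five elements
  c\<inverse>\<lambda>12, \<lambda>21 c, \<lambda>13 c, c\<inverse>\<lambda>31, \<lambda>32 c.
  The six defining relations of PV3 become six relations among these elements, and those are
  exactly what is needed for c \<mapsto> t and \<lambda>s \<mapsto> t \<nu>s resp. \<nu>s t\<inverse> (where \<nu>s = G3_gen s is the
  generator of G3 built from \<lambda>s and t generates \<int>) to define a homomorphism \<phi> : PV3 \<rightarrow> G3 \<star> \<int>.
  Conversely the free product yields \<psi> : G3 \<star> \<int> \<rightarrow> PV3, the inclusion on G3 and t \<mapsto> c.
  Both composites fix generators: \<psi>\<phi> by construction, and \<phi>\<psi> because \<phi> agrees with the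
  inclusion of the free factor G3, which is checked on the five generators.\<close>

lemma pres_eq_append:
  assumes "pres_eq R u u'" and "pres_eq R v v'"
  shows "pres_eq R (u @ v) (u' @ v')"
proof -
  have context_closed: "pres_eq R (x @ u @ y) (x @ u' @ y)" if "pres_eq R u u'" for x y u u'
    using that
  proof (induction rule: pres_eq.induct)
    case (pres_cancel u a b v)
    show ?case using pres_eq.pres_cancel[of R "x @ u" a b "v @ y"] by simp
  next
    case (pres_rel r u v)
    show ?case using pres_eq.pres_rel[OF pres_rel, of "x @ u" "v @ y"] by simp
  qed (auto intro: pres_eq.intros)
  show ?thesis
    using context_closed[OF assms(1), of "[]" v] context_closed[OF assms(2), of u' "[]"]
    by (auto intro: pres_eq.pres_trans)
qed

definition word_inv :: "'a word \<Rightarrow> 'a word" where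
  "word_inv w = rev (map (\<lambda>(a, b). (a, \<not> b)) w)"

lemma word_inv_Cons [simp]: "word_inv ((a, b) # w) = word_inv w @ [(a, \<not> b)]"
  by (simp add: word_inv_def)

lemma word_inv_in_lists: "w \<in> lists (S \<times> UNIV) \<Longrightarrow> word_inv w \<in> lists (S \<times> UNIV)"
  by (auto simp: word_inv_def)

lemma pres_eq_word_inv_append: "pres_eq R (word_inv w @ w) []"
proof (induction w)
  case Nil
  show ?case by (simp add: word_inv_def pres_eq.pres_refl)
next
  case (Cons x w)
  obtain a b where x: "x = (a, b)" by force
  have "pres_eq R (word_inv w @ [(a, \<not> b), (a, \<not> \<not> b)] @ w) (word_inv w @ w)"
    by (rule pres_eq.pres_cancel)
  then show ?case using Cons x by (auto intro: pres_eq.pres_trans)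
qed

lemma word_class_eq_iff: "word_class R u = word_class R v \<longleftrightarrow> pres_eq R u v"
proof
  assume "word_class R u = word_class R v"
  then show "pres_eq R u v"
    unfolding word_class_def using pres_eq.pres_refl[of R v] by blast
next
  assume "pres_eq R u v"
  then show "word_class R u = word_class R v"
    unfolding word_class_def by (auto intro: pres_eq.pres_trans pres_eq.pres_sym)
qed

lemma carrier_presented_group: "carrier (presented_group S R) = word_class R ` lists (S \<times> UNIV)"
  by (simp add: presented_group_def)

lemma one_presented_group: "\<one>\<^bsub>presented_group S R\<^esub> = word_class R []"
  by (simp add: presented_group_def)

lemma mult_presented_group:
  "word_class R u \<otimes>\<^bsub>presented_group S R\<^esub> word_class R v = word_class R (u @ v)"
  unfolding presented_group_def word_class_def
  by (auto intro: pres_eq.pres_trans pres_eq_append pres_eq.pres_refl)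

lemma group_presented_group: "group (presented_group S R)"
proof (rule groupI)
  show "\<one>\<^bsub>presented_group S R\<^esub> \<in> carrier (presented_group S R)"
    by (auto simp: one_presented_group carrier_presented_group)
next
  fix x y
  assume "x \<in> carrier (presented_group S R)" "y \<in> carrier (presented_group S R)"
  then obtain u v where "u \<in> lists (S \<times> UNIV)" "v \<in> lists (S \<times> UNIV)"
    "x = word_class R u" "y = word_class R v"
    by (auto simp: carrier_presented_group)
  then show "x \<otimes>\<^bsub>presented_group S R\<^esub> y \<in> carrier (presented_group S R)"
    by (auto simp: carrier_presented_group mult_presented_group)
next
  fix x y z
  assume "x \<in> carrier (presented_group S R)" "y \<in> carrier (presented_group S R)"
    "z \<in> carrier (presented_group S R)"
  then show "x \<otimes>\<^bsub>presented_group S R\<^esub> y \<otimes>\<^bsub>presented_group S R\<^esub> z =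
      x \<otimes>\<^bsub>presented_group S R\<^esub> (y \<otimes>\<^bsub>presented_group S R\<^esub> z)"
    by (auto simp: carrier_presented_group mult_presented_group)
next
  fix x
  assume "x \<in> carrier (presented_group S R)"
  then obtain w where w: "w \<in> lists (S \<times> UNIV)" "x = word_class R w"
    by (auto simp: carrier_presented_group)
  then show "\<one>\<^bsub>presented_group S R\<^esub> \<otimes>\<^bsub>presented_group S R\<^esub> x = x"
    by (simp add: one_presented_group mult_presented_group)
  show "\<exists>y\<in>carrier (presented_group S R). y \<otimes>\<^bsub>presented_group S R\<^esub> x = \<one>\<^bsub>presented_group S R\<^esub>"
    using w word_inv_in_lists[OF w(1)] pres_eq_word_inv_append[of R w]
    by (auto simp: carrier_presented_group mult_presented_group one_presented_group word_class_eq_iff)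
qed

lemma inv_letter_presented_group:
  assumes "a \<in> S"
  shows "inv\<^bsub>presented_group S R\<^esub> word_class R [(a, True)] = word_class R [(a, False)]"
proof (rule group.inv_equality[OF group_presented_group])
  show "word_class R [(a, False)] \<otimes>\<^bsub>presented_group S R\<^esub> word_class R [(a, True)]
      = \<one>\<^bsub>presented_group S R\<^esub>"
    using pres_eq.pres_cancel[of R "[]" a False "[]"]
    by (simp add: mult_presented_group one_presented_group word_class_eq_iff)
qed (use assms in \<open>auto simp: carrier_presented_group\<close>)

fun word_eval :: "('b, 'c) monoid_scheme \<Rightarrow> ('a \<Rightarrow> 'b) \<Rightarrow> 'a word \<Rightarrow> 'b" where
  "word_eval G f [] = \<one>\<^bsub>G\<^esub>"
| "word_eval G f ((a, b) # w) = (if b then f a else inv\<^bsub>G\<^esub> f a) \<otimes>\<^bsub>G\<^esub> word_eval G f w"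

lemma word_eval_cong:
  "(\<And>a b. (a, b) \<in> set w \<Longrightarrow> f a = g a) \<Longrightarrow> word_eval G f w = word_eval G g w"
proof (induction w)
  case (Cons x w)
  obtain a b where x: "x = (a, b)" by force
  have "f a = g a" "word_eval G f w = word_eval G g w"
    using Cons x by auto
  then show ?case using x by simp
qed simp

lemma word_eval_letters:
  "w \<in> lists (S \<times> UNIV) \<Longrightarrow>
     word_eval (presented_group S R) (\<lambda>a. word_class R [(a, True)]) w = word_class R w"
proof (induction w)
  case (Cons x w)
  obtain a b where x: "x = (a, b)" by force
  then show ?case
    using Cons by (cases b) (simp_all add: inv_letter_presented_group mult_presented_group)
qed (simp add: one_presented_group)

context group
begin

lemma word_eval_closed:
  "(\<And>a. a \<in> A \<Longrightarrow> f a \<in> carrier G) \<Longrightarrow> w \<in> lists (A \<times> UNIV) \<Longrightarrow>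
    word_eval G f w \<in> carrier G"
  by (induction w) auto

lemma word_eval_append:
  "(\<And>a. f a \<in> carrier G) \<Longrightarrow> word_eval G f (u @ v) = word_eval G f u \<otimes> word_eval G f v"
  by (induction u) (auto simp: m_assoc word_eval_closed[where A = UNIV])

lemma word_eval_commutation_relator:
  assumes "f a \<in> carrier G" "f b \<in> carrier G" "f c \<in> carrier G"
  shows "word_eval G f [(a, True), (b, True), (c, True), (a, False), (b, False), (c, False)] = \<one>
    \<longleftrightarrow> f a \<otimes> (f b \<otimes> f c) = f c \<otimes> (f b \<otimes> f a)"
proof -
  have "word_eval G f [(a, True), (b, True), (c, True), (a, False), (b, False), (c, False)]
      = (f a \<otimes> (f b \<otimes> f c)) \<otimes> inv (f c \<otimes> (f b \<otimes> f a))"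
    using assms by (simp add: inv_mult_group m_assoc)
  moreover have "x \<otimes> inv y = \<one> \<longleftrightarrow> x = y" if "x \<in> carrier G" "y \<in> carrier G" for x y
    using that by (metis inv_equality inv_inv inv_closed r_inv)
  ultimately show ?thesis
    using assms by simp
qed

lemma word_eval_pres_eq:
  assumes "\<And>a. f a \<in> carrier G" and "\<And>r. r \<in> R \<Longrightarrow> word_eval G f r = \<one>"
  shows "pres_eq R u v \<Longrightarrow> word_eval G f u = word_eval G f v"
proof (induction rule: pres_eq.induct)
  case (pres_cancel u a b v)
  have "word_eval G f ((a, b) # (a, \<not> b) # v) = word_eval G f v"
    using assms(1) by (cases b) (simp_all add: m_assoc[symmetric] word_eval_closed[where A = UNIV])
  then show ?case
    using assms(1) by (simp add: word_eval_append del: word_eval.simps)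
next
  case (pres_rel r u v)
  then show ?case using assms by (simp add: word_eval_append word_eval_closed[where A = UNIV] del: word_eval.simps)
qed auto

end

definition presented_lift ::
    "('b, 'c) monoid_scheme \<Rightarrow> ('a \<Rightarrow> 'b) \<Rightarrow> 'a word set \<Rightarrow> 'a word set \<Rightarrow> 'b" where
  "presented_lift G f R x = word_eval G f (SOME w. x = word_class R w)"

context group
begin

lemma presented_lift_word_class:
  assumes "\<And>a. f a \<in> carrier G" and "\<And>r. r \<in> R \<Longrightarrow> word_eval G f r = \<one>"
  shows "presented_lift G f R (word_class R w) = word_eval G f w"
proof -
  define w' where "w' = (SOME w'. word_class R w = word_class R w')"
  have "word_class R w = word_class R w'"
    unfolding w'_def by (rule someI) (rule refl)
  then have "pres_eq R w' w"
    unfolding word_class_eq_iff by (rule pres_eq.pres_sym)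
  have "presented_lift G f R (word_class R w) = word_eval G f w'"
    by (simp only: presented_lift_def w'_def)
  also have "\<dots> = word_eval G f w"
    using word_eval_pres_eq[OF assms \<open>pres_eq R w' w\<close>] .
  finally show ?thesis .
qed

lemma presented_lift_hom:
  assumes "\<And>a. f a \<in> carrier G" and "\<And>r. r \<in> R \<Longrightarrow> word_eval G f r = \<one>"
  shows "presented_lift G f R \<in> hom (presented_group S R) G"
  by (rule homI)
    (auto simp: carrier_presented_group mult_presented_group presented_lift_word_class[OF assms]
      word_eval_closed[where A = UNIV, OF assms(1)] word_eval_append[OF assms(1)])

end

lemma hom_word_eval:
  assumes "group G" "group H" "h \<in> hom G H" "\<And>a. a \<in> A \<Longrightarrow> f a \<in> carrier G" "w \<in> lists (A \<times> UNIV)"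
  shows "h (word_eval G f w) = word_eval H (h \<circ> f) w"
  using assms(4,5)
proof (induction w)
  case Nil
  then show ?case using assms(1-3) by (simp add: hom_one)
next
  case (Cons x w)
  interpret h: group_hom G H h
    using assms(1-3) by (simp add: group_hom_def group_hom_axioms_def)
  obtain a b where x: "x = (a, b)" by force
  have "f a \<in> carrier G" "word_eval G f w \<in> carrier G"
    using Cons x group.word_eval_closed[OF assms(1), of A f w] by auto
  then show ?case
    using Cons x by (auto simp: h.hom_mult h.hom_inv)
qed

lemma presented_group_hom_eqI:
  assumes "group H" "h \<in> hom (presented_group S R) H" "k \<in> hom (presented_group S R) H"
    and "\<And>a. a \<in> S \<Longrightarrow> h (word_class R [(a, True)]) = k (word_class R [(a, True)])"
    and "x \<in> carrier (presented_group S R)"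
  shows "h x = k x"
proof -
  let ?letter = "\<lambda>a. word_class R [(a, True)]"
  obtain w where w: "w \<in> lists (S \<times> UNIV)" "x = word_class R w"
    using assms(5) by (auto simp: carrier_presented_group)
  have letters: "\<And>a. a \<in> S \<Longrightarrow> ?letter a \<in> carrier (presented_group S R)"
    by (auto simp: carrier_presented_group)
  have "h x = word_eval H (h \<circ> ?letter) w"
    using hom_word_eval[where f = ?letter, OF group_presented_group assms(1,2) letters w(1)] w by (simp add: word_eval_letters)
  also have "\<dots> = word_eval H (k \<circ> ?letter) w"
    using w(1) assms(4) by (intro word_eval_cong) auto
  also have "\<dots> = k x"
    using hom_word_eval[where f = ?letter, OF group_presented_group assms(1,3) letters w(1)] w by (simp add: word_eval_letters)
  finally show ?thesis .
qed

lemma presented_group_hom_idI: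
  assumes "h \<in> hom (presented_group S R) (presented_group S R)"
    and "\<And>a. a \<in> S \<Longrightarrow> h (word_class R [(a, True)]) = word_class R [(a, True)]"
    and "x \<in> carrier (presented_group S R)"
  shows "h x = x"
proof -
  have "(\<lambda>x. x) \<in> hom (presented_group S R) (presented_group S R)"
    by (rule homI) auto
  then show ?thesis
    by (rule presented_group_hom_eqI[where k = "\<lambda>x. x", OF group_presented_group assms(1)])
      (simp_all add: assms)
qed

lemma letter_mult_by_relator:
  assumes "[(x, True), (y, True), (z, False)] \<in> R"
  shows "word_class R [(x, True)] \<otimes>\<^bsub>presented_group S R\<^esub> word_class R [(y, True)]
    = word_class R [(z, True)]"
proof -
  have "pres_eq R [(x, True), (y, True), (z, False), (z, True)] [(x, True), (y, True)]"
    using pres_eq.pres_cancel[of R "[(x, True), (y, True)]" z False "[]"] by simp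
  moreover have "pres_eq R [(x, True), (y, True), (z, False), (z, True)] [(z, True)]"
    using pres_eq.pres_rel[OF assms, of "[]" "[(z, True)]"] by simp
  ultimately have "pres_eq R [(x, True), (y, True)] [(z, True)]"
    by (rule pres_eq.pres_trans[OF pres_eq.pres_sym])
  then show ?thesis
    by (simp add: mult_presented_group word_class_eq_iff)
qed

lemma (in group) hom_subgroup_generated_eqI:
  assumes "group K" "h \<in> hom G K" "k \<in> hom (subgroup_generated G A) K"
    and "\<And>a. a \<in> A \<Longrightarrow> h a = k a" "A \<subseteq> carrier G"
    and "x \<in> carrier (subgroup_generated G A)"
  shows "h x = k x"
proof -
  interpret h: group_hom "subgroup_generated G A" K h
    using assms(1,2) by (simp add: group_hom_def group_hom_axioms_def hom_from_subgroup_generated)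
  interpret k: group_hom "subgroup_generated G A" K k
    using assms(1,3) by (simp add: group_hom_def group_hom_axioms_def)
  have "x \<in> generate G A"
    using assms(5,6) by (simp add: carrier_subgroup_generated Int_absorb1)
  then show ?thesis
  proof (induction rule: generate.induct)
    case one
    then show ?case using h.hom_one k.hom_one by simp
  next
    case (incl a)
    then show ?case by (rule assms(4))
  next
    case (inv a)
    then have "a \<in> carrier (subgroup_generated G A)"
      using assms(5) by (simp add: carrier_subgroup_generated Int_absorb1 generate.incl)
    then show ?case
      using h.hom_inv k.hom_inv assms(4) inv by simp
  next
    case (eng a b)
    then have "a \<in> carrier (subgroup_generated G A)" "b \<in> carrier (subgroup_generated G A)"
      using assms(5) by (simp_all add: carrier_subgroup_generated Int_absorb1)
    then show ?case
      using h.hom_mult k.hom_mult eng by simp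
  qed
qed

definition free_product_rels ::
    "('a, 'c) monoid_scheme \<Rightarrow> ('b, 'd) monoid_scheme \<Rightarrow> ('a + 'b) word set" where
  "free_product_rels G H =
     {[(Inl g, True), (Inl h, True), (Inl (g \<otimes>\<^bsub>G\<^esub> h), False)] | g h.
        g \<in> carrier G \<and> h \<in> carrier G}
     \<union> {[(Inr g, True), (Inr h, True), (Inr (g \<otimes>\<^bsub>H\<^esub> h), False)] | g h.
        g \<in> carrier H \<and> h \<in> carrier H}"

lemma free_product_presented:
  "G \<star> H = presented_group (Inl ` carrier G \<union> Inr ` carrier H) (free_product_rels G H)"
  by (simp add: free_product_def free_product_rels_def)

definition fp_inl :: "('a, 'c) monoid_scheme \<Rightarrow> ('b, 'd) monoid_scheme \<Rightarrow> 'a \<Rightarrow> ('a + 'b) word set" where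
  "fp_inl G H g = word_class (free_product_rels G H) [(Inl g, True)]"

definition fp_inr :: "('a, 'c) monoid_scheme \<Rightarrow> ('b, 'd) monoid_scheme \<Rightarrow> 'b \<Rightarrow> ('a + 'b) word set" where
  "fp_inr G H h = word_class (free_product_rels G H) [(Inr h, True)]"

lemma group_free_product: "group (G \<star> H)"
  by (simp add: free_product_presented group_presented_group)

lemma fp_inl_hom: "fp_inl G H \<in> hom G (G \<star> H)"
proof (rule homI)
  fix x assume "x \<in> carrier G"
  then show "fp_inl G H x \<in> carrier (G \<star> H)"
    by (auto simp: free_product_presented fp_inl_def carrier_presented_group intro!: imageI)
next
  fix x y assume "x \<in> carrier G" "y \<in> carrier G"
  then have "[(Inl x, True), (Inl y, True), (Inl (x \<otimes>\<^bsub>G\<^esub> y), False)] \<in> free_product_rels G H"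
    by (auto simp: free_product_rels_def)
  then show "fp_inl G H (x \<otimes>\<^bsub>G\<^esub> y) = fp_inl G H x \<otimes>\<^bsub>G \<star> H\<^esub> fp_inl G H y"
    unfolding free_product_presented fp_inl_def by (rule letter_mult_by_relator[symmetric])
qed

lemma fp_inr_hom: "fp_inr G H \<in> hom H (G \<star> H)"
proof (rule homI)
  fix x assume "x \<in> carrier H"
  then show "fp_inr G H x \<in> carrier (G \<star> H)"
    by (auto simp: free_product_presented fp_inr_def carrier_presented_group intro!: imageI)
next
  fix x y assume "x \<in> carrier H" "y \<in> carrier H"
  then have "[(Inr x, True), (Inr y, True), (Inr (x \<otimes>\<^bsub>H\<^esub> y), False)] \<in> free_product_rels G H"
    by (auto simp: free_product_rels_def)
  then show "fp_inr G H (x \<otimes>\<^bsub>H\<^esub> y) = fp_inr G H x \<otimes>\<^bsub>G \<star> H\<^esub> fp_inr G H y"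
    unfolding free_product_presented fp_inr_def by (rule letter_mult_by_relator[symmetric])
qed

text \<open>Letters outside the carriers are sent to the identity: presented_lift needs a letter map
  into the carrier everywhere, because free cancellation may insert arbitrary letters.\<close>

definition fp_case ::
    "('a, 'c) monoid_scheme \<Rightarrow> ('b, 'd) monoid_scheme \<Rightarrow> ('k, 'e) monoid_scheme
       \<Rightarrow> ('a \<Rightarrow> 'k) \<Rightarrow> ('b \<Rightarrow> 'k) \<Rightarrow> ('a + 'b) word set \<Rightarrow> 'k" where
  "fp_case G H K f g = presented_lift K
     (case_sum (\<lambda>x. if x \<in> carrier G then f x else \<one>\<^bsub>K\<^esub>) (\<lambda>y. if y \<in> carrier H then g y else \<one>\<^bsub>K\<^esub>))
     (free_product_rels G H)"

lemma fp_case_hom_and_values: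
  assumes "group G" "group H" "group K" "f \<in> hom G K" "g \<in> hom H K"
  shows "fp_case G H K f g \<in> hom (G \<star> H) K"
    and "x \<in> carrier G \<Longrightarrow> fp_case G H K f g (fp_inl G H x) = f x"
    and "y \<in> carrier H \<Longrightarrow> fp_case G H K f g (fp_inr G H y) = g y"
proof -
  interpret K: group K by (fact assms(3))
  let ?e = "case_sum (\<lambda>x. if x \<in> carrier G then f x else \<one>\<^bsub>K\<^esub>) (\<lambda>y. if y \<in> carrier H then g y else \<one>\<^bsub>K\<^esub>)"
  have closed: "?e a \<in> carrier K" for a
    using assms(4,5) by (cases a) (auto simp: hom_in_carrier)
  have product_relator: "u \<otimes>\<^bsub>K\<^esub> (v \<otimes>\<^bsub>K\<^esub> inv\<^bsub>K\<^esub> (u \<otimes>\<^bsub>K\<^esub> v)) = \<one>\<^bsub>K\<^esub>"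
    if "u \<in> carrier K" "v \<in> carrier K" for u v
    using that by (simp add: K.inv_mult_group K.m_assoc[symmetric])
  have relators: "word_eval K ?e r = \<one>\<^bsub>K\<^esub>" if "r \<in> free_product_rels G H" for r
  proof (cases rule: UnE[OF that[unfolded free_product_rels_def]])
    case 1
    then obtain a b where "r = [(Inl a, True), (Inl b, True), (Inl (a \<otimes>\<^bsub>G\<^esub> b), False)]"
      "a \<in> carrier G" "b \<in> carrier G" by blast
    then show ?thesis
      using assms(1,4) by (simp add: hom_mult hom_in_carrier group.subgroup_self subgroup.m_closed product_relator)
  next
    case 2
    then obtain a b where "r = [(Inr a, True), (Inr b, True), (Inr (a \<otimes>\<^bsub>H\<^esub> b), False)]"
      "a \<in> carrier H" "b \<in> carrier H" by blast
    then show ?thesis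
      using assms(2,5) by (simp add: hom_mult hom_in_carrier group.subgroup_self subgroup.m_closed product_relator)
  qed
  show "fp_case G H K f g \<in> hom (G \<star> H) K"
    unfolding fp_case_def free_product_presented by (rule K.presented_lift_hom[OF closed relators])
  show "x \<in> carrier G \<Longrightarrow> fp_case G H K f g (fp_inl G H x) = f x"
    by (simp add: fp_case_def fp_inl_def K.presented_lift_word_class[OF closed relators] hom_in_carrier[OF assms(4)])
  show "y \<in> carrier H \<Longrightarrow> fp_case G H K f g (fp_inr G H y) = g y"
    by (simp add: fp_case_def fp_inr_def K.presented_lift_word_class[OF closed relators] hom_in_carrier[OF assms(5)])
qed

context group
begin

lemma inv_cancel_left: "x \<in> carrier G \<Longrightarrow> y \<in> carrier G \<Longrightarrow> inv x \<otimes> (x \<otimes> y) = y"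
  by (simp add: m_assoc[symmetric])

lemma cancel_inv_left: "x \<in> carrier G \<Longrightarrow> y \<in> carrier G \<Longrightarrow> x \<otimes> (inv x \<otimes> y) = y"
  by (simp add: m_assoc[symmetric])

end

text \<open>Keeps the generator index 1 from being rewritten to Suc 0.\<close>

declare One_nat_def [simp del]

lemma PV3_gens_eq: "PV3_gens = {(1, 2), (2, 1), (1, 3), (3, 1), (2, 3), (3, 2)}"
  by (auto simp: PV3_gens_def)

lemma PV3_rels_iff:
  "r \<in> PV3_rels \<longleftrightarrow> (\<exists>k i j. r = [((k, i), True), ((k, j), True), ((i, j), True),
                                   ((k, i), False), ((k, j), False), ((i, j), False)]
     \<and> (k, i, j) \<in> {(1, 2, 3), (1, 3, 2), (2, 1, 3), (2, 3, 1), (3, 1, 2), (3, 2, 1)})"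
proof -
  have permutation: "{i, j, k} = {1, 2, 3} \<and> i \<noteq> j \<and> j \<noteq> k \<and> i \<noteq> k \<longleftrightarrow>
      (k, i, j) \<in> {(1, 2, 3), (1, 3, 2), (2, 1, 3), (2, 3, 1), (3, 1, 2), (3, 2, 1)}" for i j k :: nat
  proof
    assume distinct: "{i, j, k} = {1, 2, 3} \<and> i \<noteq> j \<and> j \<noteq> k \<and> i \<noteq> k"
    then have "i \<in> {1, 2, 3}" "j \<in> {1, 2, 3}" "k \<in> {1, 2, 3}" by blast+
    then show "(k, i, j) \<in> {(1, 2, 3), (1, 3, 2), (2, 1, 3), (2, 3, 1), (3, 1, 2), (3, 2, 1)}"
      using distinct by auto
  qed (auto simp: insert_commute)
  let ?relator = "\<lambda>k i j. [((k, i), True), ((k, j), True), ((i, j), True),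
                             ((k, i), False), ((k, j), False), ((i, j), False)]"
  show ?thesis
  proof
    assume "r \<in> PV3_rels"
    then obtain i j k where r: "r = ?relator k i j"
      and cond: "{i, j, k} = {1, 2, 3} \<and> i \<noteq> j \<and> j \<noteq> k \<and> i \<noteq> k"
      unfolding PV3_rels_def mem_Collect_eq by (elim exE conjE) (rule that; simp only: conj_absorb)
    show "\<exists>k i j. r = ?relator k i j
        \<and> (k, i, j) \<in> {(1, 2, 3), (1, 3, 2), (2, 1, 3), (2, 3, 1), (3, 1, 2), (3, 2, 1)}"
      using r permutation[THEN iffD1, OF cond] by blast
  next
    assume "\<exists>k i j. r = ?relator k i j
        \<and> (k, i, j) \<in> {(1, 2, 3), (1, 3, 2), (2, 1, 3), (2, 3, 1), (3, 1, 2), (3, 2, 1)}"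
    then obtain k i j where r: "r = ?relator k i j"
      and "(k, i, j) \<in> {(1, 2, 3), (1, 3, 2), (2, 1, 3), (2, 3, 1), (3, 1, 2), (3, 2, 1)}"
      by blast
    from this(2) have cond: "{i, j, k} = {1, 2, 3} \<and> i \<noteq> j \<and> j \<noteq> k \<and> i \<noteq> k"
      by (rule permutation[THEN iffD2])
    show "r \<in> PV3_rels"
      unfolding PV3_rels_def mem_Collect_eq by (intro exI) (rule conjI[OF r cond])
  qed
qed

definition lam :: "nat \<times> nat \<Rightarrow> (nat \<times> nat) word set" where
  "lam s = word_class PV3_rels [(s, True)]"

lemma group_PV3: "group PV3"
  unfolding PV3_def by (rule group_presented_group)

interpretation P: group PV3
  by (rule group_PV3)

lemma lam_closed: "s \<in> PV3_gens \<Longrightarrow> lam s \<in> carrier PV3"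
  by (auto simp: lam_def PV3_def carrier_presented_group)

lemma lam_relation:
  assumes "(k, i, j) \<in> {(1, 2, 3), (1, 3, 2), (2, 1, 3), (2, 3, 1), (3, 1, 2), (3, 2, 1)}"
  shows "lam (k, i) \<otimes>\<^bsub>PV3\<^esub> (lam (k, j) \<otimes>\<^bsub>PV3\<^esub> lam (i, j))
       = lam (i, j) \<otimes>\<^bsub>PV3\<^esub> (lam (k, j) \<otimes>\<^bsub>PV3\<^esub> lam (k, i))"
proof -
  let ?r = "[((k, i), True), ((k, j), True), ((i, j), True), ((k, i), False), ((k, j), False), ((i, j), False)]"
  have "?r \<in> PV3_rels"
    using assms by (auto simp: PV3_rels_iff)
  then have "pres_eq PV3_rels ?r []"
    using pres_eq.pres_rel[of ?r PV3_rels "[]" "[]"] by simp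
  moreover have "?r \<in> lists (PV3_gens \<times> UNIV)"
    using assms by (auto simp: PV3_gens_eq)
  ultimately have "word_eval PV3 lam ?r = \<one>\<^bsub>PV3\<^esub>"
    using word_eval_letters[of ?r PV3_gens PV3_rels]
    by (simp add: lam_def[abs_def] PV3_def one_presented_group word_class_eq_iff)
  then show ?thesis
    using assms by (subst (asm) P.word_eval_commutation_relator) (auto intro!: lam_closed simp: PV3_gens_eq)
qed

definition G3_gen :: "nat \<times> nat \<Rightarrow> (nat \<times> nat) word set" where
  "G3_gen s = (if s \<in> {(1, 2), (3, 1)} then inv\<^bsub>PV3\<^esub> lam (2, 3) \<otimes>\<^bsub>PV3\<^esub> lam s
               else lam s \<otimes>\<^bsub>PV3\<^esub> lam (2, 3))"

definition G3 :: "((nat \<times> nat) word set) monoid" where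
  "G3 = subgroup_generated PV3 (G3_gen ` (PV3_gens - {(2, 3)}))"

lemma G3_gen_closed: "s \<in> PV3_gens \<Longrightarrow> G3_gen s \<in> carrier PV3"
  by (auto simp: G3_gen_def lam_closed PV3_gens_eq)

lemma G3_gen_in_G3: "s \<in> PV3_gens - {(2, 3)} \<Longrightarrow> G3_gen s \<in> carrier G3"
  unfolding G3_def carrier_subgroup_generated
  by (auto intro!: generate.incl simp: G3_gen_closed)

lemma group_G3: "group G3"
  by (simp add: G3_def)

lemma G3_mult_closed: "x \<in> carrier G3 \<Longrightarrow> y \<in> carrier G3 \<Longrightarrow> x \<otimes>\<^bsub>PV3\<^esub> y \<in> carrier G3"
  using monoid.m_closed[OF group.is_monoid[OF group_G3], of x y] by (simp add: G3_def)

lemma G3_carrier_subset: "carrier G3 \<subseteq> carrier PV3"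
  unfolding G3_def by (rule P.carrier_subgroup_generated_subset)

lemma G3_gen_relations:
  shows "G3_gen (1, 2) \<otimes>\<^bsub>PV3\<^esub> G3_gen (1, 3) = G3_gen (1, 3) \<otimes>\<^bsub>PV3\<^esub> G3_gen (1, 2)"
    and "G3_gen (1, 3) \<otimes>\<^bsub>PV3\<^esub> (G3_gen (1, 2) \<otimes>\<^bsub>PV3\<^esub> G3_gen (3, 2))
       = G3_gen (3, 2) \<otimes>\<^bsub>PV3\<^esub> (G3_gen (1, 2) \<otimes>\<^bsub>PV3\<^esub> G3_gen (1, 3))"
    and "G3_gen (2, 1) \<otimes>\<^bsub>PV3\<^esub> G3_gen (1, 3) = G3_gen (1, 3) \<otimes>\<^bsub>PV3\<^esub> G3_gen (2, 1)"
    and "G3_gen (2, 1) \<otimes>\<^bsub>PV3\<^esub> G3_gen (3, 1) = G3_gen (3, 1) \<otimes>\<^bsub>PV3\<^esub> G3_gen (2, 1)"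
    and "G3_gen (3, 1) \<otimes>\<^bsub>PV3\<^esub> (G3_gen (3, 2) \<otimes>\<^bsub>PV3\<^esub> G3_gen (1, 2))
       = G3_gen (1, 2) \<otimes>\<^bsub>PV3\<^esub> (G3_gen (3, 2) \<otimes>\<^bsub>PV3\<^esub> G3_gen (3, 1))"
    and "G3_gen (3, 2) \<otimes>\<^bsub>PV3\<^esub> (G3_gen (3, 1) \<otimes>\<^bsub>PV3\<^esub> G3_gen (2, 1))
       = G3_gen (2, 1) \<otimes>\<^bsub>PV3\<^esub> (G3_gen (3, 1) \<otimes>\<^bsub>PV3\<^esub> G3_gen (3, 2))"
proof -
  have carrier: "lam (1, 2) \<in> carrier PV3" "lam (2, 1) \<in> carrier PV3" "lam (1, 3) \<in> carrier PV3"
    "lam (3, 1) \<in> carrier PV3" "lam (2, 3) \<in> carrier PV3" "lam (3, 2) \<in> carrier PV3"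
    by (simp_all add: lam_closed PV3_gens_eq)
  note simps = G3_gen_def carrier P.m_assoc P.inv_cancel_left P.cancel_inv_left
  show "G3_gen (1, 2) \<otimes>\<^bsub>PV3\<^esub> G3_gen (1, 3) = G3_gen (1, 3) \<otimes>\<^bsub>PV3\<^esub> G3_gen (1, 2)"
    using lam_relation[of 1 2 3] by (simp add: simps)
  have "lam (1, 3) \<otimes>\<^bsub>PV3\<^esub> (lam (1, 2) \<otimes>\<^bsub>PV3\<^esub> (lam (3, 2) \<otimes>\<^bsub>PV3\<^esub> lam (2, 3)))
      = lam (3, 2) \<otimes>\<^bsub>PV3\<^esub> (lam (1, 2) \<otimes>\<^bsub>PV3\<^esub> (lam (1, 3) \<otimes>\<^bsub>PV3\<^esub> lam (2, 3)))"
    using lam_relation[of 1 3 2] by (simp add: P.m_assoc[symmetric] carrier)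
  then show "G3_gen (1, 3) \<otimes>\<^bsub>PV3\<^esub> (G3_gen (1, 2) \<otimes>\<^bsub>PV3\<^esub> G3_gen (3, 2))
       = G3_gen (3, 2) \<otimes>\<^bsub>PV3\<^esub> (G3_gen (1, 2) \<otimes>\<^bsub>PV3\<^esub> G3_gen (1, 3))"
    by (simp add: simps)
  have "lam (2, 1) \<otimes>\<^bsub>PV3\<^esub> (lam (2, 3) \<otimes>\<^bsub>PV3\<^esub> (lam (1, 3) \<otimes>\<^bsub>PV3\<^esub> lam (2, 3)))
      = lam (1, 3) \<otimes>\<^bsub>PV3\<^esub> (lam (2, 3) \<otimes>\<^bsub>PV3\<^esub> (lam (2, 1) \<otimes>\<^bsub>PV3\<^esub> lam (2, 3)))"
    using lam_relation[of 2 1 3] by (simp add: P.m_assoc[symmetric] carrier)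
  then show "G3_gen (2, 1) \<otimes>\<^bsub>PV3\<^esub> G3_gen (1, 3) = G3_gen (1, 3) \<otimes>\<^bsub>PV3\<^esub> G3_gen (2, 1)"
    by (simp add: simps)
  have "inv\<^bsub>PV3\<^esub> lam (2, 3) \<otimes>\<^bsub>PV3\<^esub> (lam (2, 3) \<otimes>\<^bsub>PV3\<^esub> (lam (2, 1) \<otimes>\<^bsub>PV3\<^esub> lam (3, 1)))
      = inv\<^bsub>PV3\<^esub> lam (2, 3) \<otimes>\<^bsub>PV3\<^esub> (lam (3, 1) \<otimes>\<^bsub>PV3\<^esub> (lam (2, 1) \<otimes>\<^bsub>PV3\<^esub> lam (2, 3)))"
    using lam_relation[of 2 3 1] by (simp add: carrier)
  then show "G3_gen (2, 1) \<otimes>\<^bsub>PV3\<^esub> G3_gen (3, 1) = G3_gen (3, 1) \<otimes>\<^bsub>PV3\<^esub> G3_gen (2, 1)"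
    by (simp add: simps)
  have "inv\<^bsub>PV3\<^esub> lam (2, 3) \<otimes>\<^bsub>PV3\<^esub> (lam (3, 1) \<otimes>\<^bsub>PV3\<^esub> (lam (3, 2) \<otimes>\<^bsub>PV3\<^esub> lam (1, 2)))
      = inv\<^bsub>PV3\<^esub> lam (2, 3) \<otimes>\<^bsub>PV3\<^esub> (lam (1, 2) \<otimes>\<^bsub>PV3\<^esub> (lam (3, 2) \<otimes>\<^bsub>PV3\<^esub> lam (3, 1)))"
    using lam_relation[of 3 1 2] by (simp add: carrier)
  then show "G3_gen (3, 1) \<otimes>\<^bsub>PV3\<^esub> (G3_gen (3, 2) \<otimes>\<^bsub>PV3\<^esub> G3_gen (1, 2))
       = G3_gen (1, 2) \<otimes>\<^bsub>PV3\<^esub> (G3_gen (3, 2) \<otimes>\<^bsub>PV3\<^esub> G3_gen (3, 1))"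
    by (simp add: simps)
  have "lam (3, 2) \<otimes>\<^bsub>PV3\<^esub> (lam (3, 1) \<otimes>\<^bsub>PV3\<^esub> (lam (2, 1) \<otimes>\<^bsub>PV3\<^esub> lam (2, 3)))
      = lam (2, 1) \<otimes>\<^bsub>PV3\<^esub> (lam (3, 1) \<otimes>\<^bsub>PV3\<^esub> (lam (3, 2) \<otimes>\<^bsub>PV3\<^esub> lam (2, 3)))"
    using lam_relation[of 3 2 1] by (simp add: P.m_assoc[symmetric] carrier)
  then show "G3_gen (3, 2) \<otimes>\<^bsub>PV3\<^esub> (G3_gen (3, 1) \<otimes>\<^bsub>PV3\<^esub> G3_gen (2, 1))
       = G3_gen (2, 1) \<otimes>\<^bsub>PV3\<^esub> (G3_gen (3, 1) \<otimes>\<^bsub>PV3\<^esub> G3_gen (3, 2))"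
    by (simp add: simps)
qed

abbreviation FP :: "((nat \<times> nat) word set + int) word set monoid" where
  "FP \<equiv> G3 \<star> integer_group"

abbreviation iota :: "(nat \<times> nat) word set \<Rightarrow> ((nat \<times> nat) word set + int) word set" where
  "iota \<equiv> fp_inl G3 integer_group"

abbreviation tau :: "((nat \<times> nat) word set + int) word set" where
  "tau \<equiv> fp_inr G3 integer_group 1"

interpretation F: group FP
  by (rule group_free_product)

lemma iota_mult: "x \<in> carrier G3 \<Longrightarrow> y \<in> carrier G3 \<Longrightarrow> iota x \<otimes>\<^bsub>FP\<^esub> iota y = iota (x \<otimes>\<^bsub>PV3\<^esub> y)"
  using hom_mult[OF fp_inl_hom, of x G3 y integer_group] by (simp add: G3_def)

lemma iota_closed: "x \<in> carrier G3 \<Longrightarrow> iota x \<in> carrier FP"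
  by (rule hom_in_carrier[OF fp_inl_hom])

lemma tau_closed: "tau \<in> carrier FP"
  by (rule hom_in_carrier[OF fp_inr_hom]) simp

definition PV3_to_FP_gen :: "nat \<times> nat \<Rightarrow> ((nat \<times> nat) word set + int) word set" where
  "PV3_to_FP_gen s =
     (if s = (2, 3) then tau
      else if s \<in> {(1, 2), (3, 1)} then tau \<otimes>\<^bsub>FP\<^esub> iota (G3_gen s)
      else if s \<in> PV3_gens then iota (G3_gen s) \<otimes>\<^bsub>FP\<^esub> inv\<^bsub>FP\<^esub> tau
      else \<one>\<^bsub>FP\<^esub>)"

lemma PV3_to_FP_gen_closed: "PV3_to_FP_gen s \<in> carrier FP"
  by (auto simp: PV3_to_FP_gen_def tau_closed iota_closed G3_gen_in_G3 PV3_gens_eq)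

lemma PV3_to_FP_gen_relation:
  assumes "(k, i, j) \<in> {(1, 2, 3), (1, 3, 2), (2, 1, 3), (2, 3, 1), (3, 1, 2), (3, 2, 1)}"
  shows "PV3_to_FP_gen (k, i) \<otimes>\<^bsub>FP\<^esub> (PV3_to_FP_gen (k, j) \<otimes>\<^bsub>FP\<^esub> PV3_to_FP_gen (i, j))
       = PV3_to_FP_gen (i, j) \<otimes>\<^bsub>FP\<^esub> (PV3_to_FP_gen (k, j) \<otimes>\<^bsub>FP\<^esub> PV3_to_FP_gen (k, i))"
proof -
  have in_G3: "G3_gen (1, 2) \<in> carrier G3" "G3_gen (2, 1) \<in> carrier G3" "G3_gen (1, 3) \<in> carrier G3"
    "G3_gen (3, 1) \<in> carrier G3" "G3_gen (3, 2) \<in> carrier G3"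
    by (simp_all add: G3_gen_in_G3 PV3_gens_eq)
  have iota_mult_left: "iota x \<otimes>\<^bsub>FP\<^esub> (iota y \<otimes>\<^bsub>FP\<^esub> w) = iota (x \<otimes>\<^bsub>PV3\<^esub> y) \<otimes>\<^bsub>FP\<^esub> w"
    if "x \<in> carrier G3" "y \<in> carrier G3" "w \<in> carrier FP" for x y w
    using that by (simp add: F.m_assoc[symmetric] iota_closed iota_mult)
  note simps = PV3_to_FP_gen_def PV3_gens_eq in_G3 iota_closed tau_closed G3_mult_closed
    F.m_assoc F.inv_cancel_left F.cancel_inv_left iota_mult iota_mult_left
  from assms show ?thesis
    using G3_gen_relations G3_carrier_subset
    by (auto simp: simps P.m_assoc)
qed

definition PV3_to_FP :: "(nat \<times> nat) word set \<Rightarrow> ((nat \<times> nat) word set + int) word set" where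
  "PV3_to_FP = presented_lift FP PV3_to_FP_gen PV3_rels"

lemma PV3_to_FP_gen_relators:
  assumes "r \<in> PV3_rels"
  shows "word_eval FP PV3_to_FP_gen r = \<one>\<^bsub>FP\<^esub>"
proof -
  obtain k i j where "r = [((k, i), True), ((k, j), True), ((i, j), True),
                          ((k, i), False), ((k, j), False), ((i, j), False)]"
    and "(k, i, j) \<in> {(1, 2, 3), (1, 3, 2), (2, 1, 3), (2, 3, 1), (3, 1, 2), (3, 2, 1)}"
    using assms by (auto simp: PV3_rels_iff)
  then show ?thesis
    by (simp only: F.word_eval_commutation_relator PV3_to_FP_gen_closed PV3_to_FP_gen_relation)
qed

lemma PV3_to_FP_hom: "PV3_to_FP \<in> hom PV3 FP"
  unfolding PV3_to_FP_def PV3_def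
  by (rule F.presented_lift_hom[OF PV3_to_FP_gen_closed PV3_to_FP_gen_relators])

lemma PV3_to_FP_lam: "PV3_to_FP (lam s) = PV3_to_FP_gen s"
  unfolding PV3_to_FP_def lam_def
  by (simp add: F.presented_lift_word_class[OF PV3_to_FP_gen_closed PV3_to_FP_gen_relators]
      PV3_to_FP_gen_closed)

lemma PV3_to_FP_on_G3:
  assumes "x \<in> carrier G3"
  shows "PV3_to_FP x = iota x"
proof -
  define T where "T = G3_gen ` (PV3_gens - {(2, 3)})"
  have G3_eq: "G3 = subgroup_generated PV3 T"
    by (simp add: G3_def T_def)
  have hom: "group_hom PV3 FP PV3_to_FP"
    by (simp add: group_hom_def group_hom_axioms_def group_PV3 group_free_product PV3_to_FP_hom)
  have on_gens: "PV3_to_FP a = iota a" if "a \<in> T" for a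
  proof -
    obtain s where s: "s \<in> PV3_gens - {(2, 3)}" "a = G3_gen s"
      using \<open>a \<in> T\<close> by (auto simp: T_def)
    then have "lam s \<in> carrier PV3" "lam (2, 3) \<in> carrier PV3" "iota (G3_gen s) \<in> carrier FP"
      by (auto simp: lam_closed iota_closed G3_gen_in_G3 PV3_gens_eq)
    then show ?thesis
      using s tau_closed
      by (auto simp: G3_gen_def PV3_to_FP_gen_def PV3_to_FP_lam group_hom.hom_inv[OF hom]
          hom_mult[OF PV3_to_FP_hom] F.inv_cancel_left F.m_assoc)
  qed
  have "T \<subseteq> carrier PV3"
    using G3_gen_closed by (auto simp: T_def)
  then show ?thesis
    using P.hom_subgroup_generated_eqI[OF group_free_product PV3_to_FP_hom, of iota T, folded G3_eq]
      fp_inl_hom on_gens assms by blast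
qed

definition FP_to_PV3 :: "((nat \<times> nat) word set + int) word set \<Rightarrow> (nat \<times> nat) word set" where
  "FP_to_PV3 = fp_case G3 integer_group PV3 (\<lambda>x. x) (\<lambda>n. lam (2, 3) [^]\<^bsub>PV3\<^esub> n)"

lemma FP_to_PV3_hom_and_values:
  shows "FP_to_PV3 \<in> hom FP PV3"
    and "x \<in> carrier G3 \<Longrightarrow> FP_to_PV3 (iota x) = x"
    and "FP_to_PV3 (fp_inr G3 integer_group n) = lam (2, 3) [^]\<^bsub>PV3\<^esub> n"
proof -
  have "(\<lambda>x. x) \<in> hom PV3 PV3"
    by (rule homI) auto
  then have "(\<lambda>x. x) \<in> hom G3 PV3"
    unfolding G3_def by (rule P.hom_from_subgroup_generated)
  moreover have "(\<lambda>n. lam (2, 3) [^]\<^bsub>PV3\<^esub> n) \<in> hom integer_group PV3"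
    by (rule P.hom_integer_group_pow) (simp add: lam_closed PV3_gens_eq)
  ultimately show "FP_to_PV3 \<in> hom FP PV3"
    and "x \<in> carrier G3 \<Longrightarrow> FP_to_PV3 (iota x) = x"
    and "FP_to_PV3 (fp_inr G3 integer_group n) = lam (2, 3) [^]\<^bsub>PV3\<^esub> n"
    using fp_case_hom_and_values[OF group_G3 group_integer_group group_PV3]
    by (simp_all add: FP_to_PV3_def)
qed

lemma FP_to_PV3_PV3_to_FP:
  assumes "x \<in> carrier PV3"
  shows "FP_to_PV3 (PV3_to_FP x) = x"
proof -
  have hom: "group_hom FP PV3 FP_to_PV3"
    by (simp add: group_hom_def group_hom_axioms_def group_PV3 group_free_product
        FP_to_PV3_hom_and_values(1))
  have on_gens: "(FP_to_PV3 \<circ> PV3_to_FP) (lam s) = lam s" if "s \<in> PV3_gens" for s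
  proof -
    have "lam s \<in> carrier PV3" "lam (2, 3) \<in> carrier PV3"
      using that by (auto simp: lam_closed PV3_gens_eq)
    moreover have "s \<noteq> (2, 3) \<Longrightarrow> iota (G3_gen s) \<in> carrier FP"
      using that by (simp add: iota_closed G3_gen_in_G3)
    ultimately show ?thesis
      using that tau_closed G3_gen_in_G3[of s]
      by (auto simp: PV3_to_FP_lam PV3_to_FP_gen_def G3_gen_def FP_to_PV3_hom_and_values
          group_hom.hom_inv[OF hom] hom_mult[OF FP_to_PV3_hom_and_values(1)]
          P.cancel_inv_left P.m_assoc)
  qed
  show ?thesis
    using presented_group_hom_idI[OF hom_compose[OF PV3_to_FP_hom FP_to_PV3_hom_and_values(1),
          unfolded PV3_def]] on_gens assms by (simp add: PV3_def lam_def)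
qed

lemma PV3_to_FP_FP_to_PV3:
  assumes "y \<in> carrier FP"
  shows "PV3_to_FP (FP_to_PV3 y) = y"
proof -
  have on_Z: "PV3_to_FP (lam (2, 3) [^]\<^bsub>PV3\<^esub> n) = fp_inr G3 integer_group n" for n :: int
  proof -
    have "lam (2, 3) \<in> carrier PV3"
      by (simp add: lam_closed PV3_gens_eq)
    from hom_int_pow[OF PV3_to_FP_hom this group_PV3 group_free_product]
    have "PV3_to_FP (lam (2, 3) [^]\<^bsub>PV3\<^esub> n) = tau [^]\<^bsub>FP\<^esub> n"
      by (simp add: PV3_to_FP_lam PV3_to_FP_gen_def)
    also have "\<dots> = fp_inr G3 integer_group n"
      using hom_int_pow[OF fp_inr_hom[of G3 integer_group] _ group_integer_group group_free_product, where x = 1 and n = n]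
      by simp
    finally show ?thesis .
  qed
  have on_letters: "(PV3_to_FP \<circ> FP_to_PV3) (word_class (free_product_rels G3 integer_group) [(a, True)])
      = word_class (free_product_rels G3 integer_group) [(a, True)]"
    if "a \<in> Inl ` carrier G3 \<union> Inr ` carrier integer_group" for a
    using that G3_carrier_subset
    by (auto simp: fp_inl_def[symmetric] fp_inr_def[symmetric] FP_to_PV3_hom_and_values
        PV3_to_FP_on_G3 on_Z)
  show ?thesis
    using presented_group_hom_idI[OF hom_compose[OF FP_to_PV3_hom_and_values(1) PV3_to_FP_hom,
          unfolded free_product_presented]] on_letters assms by (simp add: free_product_presented)
qed

theorem proposition2p1:
  shows "\<exists>G3 :: ((nat \<times> nat) word set) monoid.
           group G3 \<and> PV3 \<cong> (G3 \<star> integer_group)"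
proof (intro exI conjI)
  show "group G3"
    by (rule group_G3)
  have "group_isomorphisms PV3 FP PV3_to_FP FP_to_PV3"
    unfolding group_isomorphisms_def
    using PV3_to_FP_hom FP_to_PV3_hom_and_values(1) FP_to_PV3_PV3_to_FP PV3_to_FP_FP_to_PV3
    by blast
  then show "PV3 \<cong> FP"
    by (intro is_isoI group_isomorphisms_imp_iso)
qed

end
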